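(* Let $G$ be a $k$-degenerate graph with maximum degree $\Delta(G)>1$ and let $H$ be an $l$-degenerate graph. Then $G+_Q H$ is $\max\{2\Delta(G)-2,\,k+l\}$-degenerate.
   Context: A graph is $k$-degenerate if its vertices can be successively deleted so that each deleted vertex has degree at most $k$ at the time of deletion. The line superposition graph $Q(G)$ has vertex set $V(G)\cup E(G)$: it is the subdivision graph $S(G)$ (each edge $e=xy$ of $G$ replaced by the path $x\,e\,y$) together with edges $ee'$ between new vertices $e,e'$ whenever the edges $e,e'$ are adjacent in $G$. The $Q$-sum $G+_Q H$ has vertex set $(V(G)\cup E(G))\times V(H)$, and $(u_1,u_2)\sim(v_1,v_2)$ iff [$u_1=v_1\in V(G)$ and $u_2v_2\in E(H)$] or [$u_2=v_2$ and $u_1v_1\in E(Q(G))$]. *)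

theory Defs
  imports Main
begin

type_synonym 'a graph = "'a set \<times> 'a set set"

definition verts :: "'a graph \<Rightarrow> 'a set" where "verts G = fst G"
definition edges :: "'a graph \<Rightarrow> 'a set set" where "edges G = snd G"

definition simple_graph :: "'a graph \<Rightarrow> bool" where
  "simple_graph G \<longleftrightarrow> finite (verts G) \<and>
     (\<forall>e \<in> edges G. e \<subseteq> verts G \<and> card e = 2)"

definition degree :: "'a graph \<Rightarrow> 'a \<Rightarrow> nat" where
  "degree G v = card {u \<in> verts G. {v, u} \<in> edges G}"

definition max_degree :: "'a graph \<Rightarrow> nat" where
  "max_degree G = (if verts G = {} then 0 else Max (degree G ` verts G))"

definition degenerate :: "nat \<Rightarrow> 'a graph \<Rightarrow> bool" where
  "degenerate k G \<longleftrightarrow> (\<exists>vs. distinct vs \<and> set vs = verts G \<and>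
     (\<forall>i < length vs. card {u \<in> set (drop i vs). {vs ! i, u} \<in> edges G} \<le> k))"

text \<open>Line superposition graph Q(G): vertices V(G) (as Inl) and E(G) (as Inr).\<close>
definition Q_graph :: "'a graph \<Rightarrow> ('a + 'a set) graph" where
  "Q_graph G = (Inl ` verts G \<union> Inr ` edges G,
     {{Inl x, Inr e} | x e. e \<in> edges G \<and> x \<in> e} \<union>
     {{Inr e, Inr e'} | e e'. e \<in> edges G \<and> e' \<in> edges G \<and> e \<noteq> e' \<and> e \<inter> e' \<noteq> {}})"

definition Q_sum :: "'a graph \<Rightarrow> 'b graph \<Rightarrow> (('a + 'a set) \<times> 'b) graph" where
  "Q_sum G H = (verts (Q_graph G) \<times> verts H,
     {{(Inl x, u2), (Inl x, v2)} | x u2 v2. x \<in> verts G \<and> {u2, v2} \<in> edges H} \<union>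
     {{(u1, w), (v1, w)} | u1 v1 w. w \<in> verts H \<and> {u1, v1} \<in> edges (Q_graph G)})"

end

theory Submission
  imports Defs
begin

text \<open>A graph is d-degenerate iff every nonempty vertex set S contains a vertex with at most d
  neighbours in S, so we look for such a vertex in every nonempty S \<subseteq> V(G +_Q H). Let \<Delta> = \<Delta>(G).
  In S, a vertex (x, w) has neighbours only in the copy of H over x and among the edge vertices
  (e, w) with x \<in> e; an edge vertex ({x, y}, w) has at most the two neighbours (x, w), (y, w) and
  at most 2\<Delta> - 2 neighbours among the edges at x or y in its layer.

  If k < \<Delta>, pick x with at most k neighbours in the projection of S to V(G); then every layer of
  S holds at most k edge vertices at x. Either S meets the copy of H over x, and a vertex of
  H-degree at most l there has at most k + l neighbours, or some ({x, y}, w) \<in> S has at most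
  1 + k + \<Delta> - 2 \<le> 2\<Delta> - 2 neighbours. If k \<ge> \<Delta>, either S contains a vertex (x, w) and the same
  argument gives l + \<Delta> \<le> k + l, or S consists of edge vertices only, each with at most 2\<Delta> - 2
  neighbours in S.\<close>

definition neighbours_in :: "'a graph \<Rightarrow> 'a set \<Rightarrow> 'a \<Rightarrow> 'a set" where
  "neighbours_in G S v = {u \<in> S. {v, u} \<in> edges G}"

definition edges_at :: "'a graph \<Rightarrow> 'a \<Rightarrow> 'a set set" where
  "edges_at G x = {e \<in> edges G. x \<in> e}"

lemma neighbours_in_mono: "S \<subseteq> T \<Longrightarrow> neighbours_in G S v \<subseteq> neighbours_in G T v"
  by (auto simp: neighbours_in_def)

lemma finite_neighbours_in: "finite S \<Longrightarrow> finite (neighbours_in G S v)"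
  by (simp add: neighbours_in_def)

lemma finite_edges:
  assumes "simple_graph G"
  shows "finite (edges G)"
proof -
  have "edges G \<subseteq> Pow (verts G)" using assms unfolding simple_graph_def by auto
  then show ?thesis using assms unfolding simple_graph_def by (meson finite_Pow_iff finite_subset)
qed

lemma finite_edges_at: "simple_graph G \<Longrightarrow> finite (edges_at G x)"
  by (simp add: edges_at_def finite_edges)

lemma simple_graph_edgeE:
  assumes "simple_graph G" "e \<in> edges G"
  obtains x y where "e = {x, y}"
  using assms unfolding simple_graph_def by (meson card_2_iff)

lemma simple_graph_edge_subset: "simple_graph G \<Longrightarrow> e \<in> edges G \<Longrightarrow> e \<subseteq> verts G"
  by (simp add: simple_graph_def)

lemma card_edges_at_within_le:
  assumes "simple_graph G" "finite X"
  shows "card {e \<in> edges_at G x. e \<subseteq> X} \<le> card (neighbours_in G X x)"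
proof -
  have "{e \<in> edges_at G x. e \<subseteq> X} \<subseteq> (\<lambda>y. {x, y}) ` neighbours_in G X x"
  proof
    fix e assume e: "e \<in> {e \<in> edges_at G x. e \<subseteq> X}"
    then obtain a b where "e = {a, b}"
      using simple_graph_edgeE[OF assms(1)] by (auto simp: edges_at_def)
    with e obtain y where "e = {x, y}" by (auto simp: edges_at_def doubleton_eq_iff)
    with e show "e \<in> (\<lambda>y. {x, y}) ` neighbours_in G X x"
      by (auto simp: edges_at_def neighbours_in_def)
  qed
  then have "card {e \<in> edges_at G x. e \<subseteq> X} \<le> card ((\<lambda>y. {x, y}) ` neighbours_in G X x)"
    using assms(2) by (intro card_mono) (auto simp: finite_neighbours_in)
  also have "\<dots> \<le> card (neighbours_in G X x)"
    using assms(2) by (intro card_image_le finite_neighbours_in)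
  finally show ?thesis .
qed

lemma card_edges_at_le_max_degree:
  assumes "simple_graph G"
  shows "card (edges_at G x) \<le> max_degree G"
proof (cases "x \<in> verts G")
  case True
  have fin: "finite (verts G)" using assms by (simp add: simple_graph_def)
  have "edges_at G x = {e \<in> edges_at G x. e \<subseteq> verts G}"
    using simple_graph_edge_subset[OF assms] by (auto simp: edges_at_def)
  also have "card \<dots> \<le> card (neighbours_in G (verts G) x)"
    by (rule card_edges_at_within_le[OF assms fin])
  also have "\<dots> = degree G x" by (simp add: neighbours_in_def degree_def)
  also have "\<dots> \<le> max_degree G" using True fin by (auto simp: max_degree_def)
  finally show ?thesis .
next
  case False
  then have "edges_at G x = {}" using simple_graph_edge_subset[OF assms] by (auto simp: edges_at_def)
  then show ?thesis by simp
qed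

lemma card_edges_at_filter_le_max_degree:
  assumes "simple_graph G"
  shows "card {e \<in> edges_at G x. P e} \<le> max_degree G"
proof -
  have "card {e \<in> edges_at G x. P e} \<le> card (edges_at G x)"
    by (rule card_mono[OF finite_edges_at[OF assms]]) auto
  also have "\<dots> \<le> max_degree G" by (rule card_edges_at_le_max_degree[OF assms])
  finally show ?thesis .
qed

subsection \<open>Degeneracy via vertex subsets\<close>

lemma degenerate_mono: "degenerate d G \<Longrightarrow> d \<le> d' \<Longrightarrow> degenerate d' G"
  unfolding degenerate_def by (meson le_trans)

lemma elimination_order_low_vertex:
  assumes "\<forall>i < length vs. card (neighbours_in G (set (drop i vs)) (vs ! i)) \<le> d"
    and "X \<subseteq> set vs" "X \<noteq> {}"
  shows "\<exists>x\<in>X. card (neighbours_in G X x) \<le> d"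
  using assms
proof (induction vs)
  case Nil
  then show ?case by simp
next
  case (Cons v vs)
  show ?case
  proof (cases "v \<in> X")
    case True
    have "card (neighbours_in G X v) \<le> card (neighbours_in G (set (v # vs)) v)"
      using Cons.prems(2) by (intro card_mono finite_neighbours_in neighbours_in_mono) auto
    also have "\<dots> \<le> d" using Cons.prems(1) by (metis drop0 length_greater_0_conv list.distinct(1) nth_Cons_0)
    finally show ?thesis using True by blast
  next
    case False
    have "\<forall>i < length vs. card (neighbours_in G (set (drop i vs)) (vs ! i)) \<le> d"
      using Cons.prems(1) by (auto dest: spec[of _ "Suc _"])
    moreover have "X \<subseteq> set vs" using False Cons.prems(2) by auto
    ultimately show ?thesis using Cons.IH Cons.prems(3) by blast
  qed
qed

lemma degenerate_iff_elimination_order: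
  "degenerate d G \<longleftrightarrow> (\<exists>vs. distinct vs \<and> set vs = verts G \<and>
     (\<forall>i < length vs. card (neighbours_in G (set (drop i vs)) (vs ! i)) \<le> d))"
  by (simp add: degenerate_def neighbours_in_def)

lemma degenerate_low_vertex:
  assumes "degenerate d G" "X \<subseteq> verts G" "X \<noteq> {}"
  shows "\<exists>x\<in>X. card (neighbours_in G X x) \<le> d"
  using assms elimination_order_low_vertex[of _ G d X]
  unfolding degenerate_iff_elimination_order by blast

lemma degenerateI:
  assumes fin: "finite (verts G)"
    and low: "\<And>S. S \<subseteq> verts G \<Longrightarrow> S \<noteq> {} \<Longrightarrow> \<exists>v\<in>S. card (neighbours_in G S v) \<le> d"
  shows "degenerate d G"
proof -
  have "\<exists>vs. distinct vs \<and> set vs = S \<and>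
          (\<forall>i < length vs. card (neighbours_in G (set (drop i vs)) (vs ! i)) \<le> d)"
    if "finite S" "S \<subseteq> verts G" for S
    using that
  proof (induction S rule: finite_psubset_induct)
    case (psubset S)
    show ?case
    proof (cases "S = {}")
      case True
      then show ?thesis by simp
    next
      case False
      then obtain v where v: "v \<in> S" "card (neighbours_in G S v) \<le> d"
        using low psubset.prems by blast
      then obtain vs where vs: "distinct vs" "set vs = S - {v}"
        "\<forall>i < length vs. card (neighbours_in G (set (drop i vs)) (vs ! i)) \<le> d"
        using psubset.IH[of "S - {v}"] psubset.prems by blast
      have "set (v # vs) = S" using vs(2) v(1) by auto
      moreover have "\<forall>i < length (v # vs).
          card (neighbours_in G (set (drop i (v # vs))) ((v # vs) ! i)) \<le> d"
        using vs(3) v(2) \<open>set (v # vs) = S\<close> by (auto simp: nth_Cons split: nat.split)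
      ultimately show ?thesis using vs(1,2) by (intro exI[of _ "v # vs"]) auto
    qed
  qed
  from this[OF fin order_refl] show ?thesis
    unfolding degenerate_iff_elimination_order .
qed

subsection \<open>Neighbourhoods in the Q-sum\<close>

lemma verts_Q_sum: "verts (Q_sum G H) = (Inl ` verts G \<union> Inr ` edges G) \<times> verts H"
  by (simp add: Q_sum_def Q_graph_def verts_def)

lemma finite_verts_Q_sum:
  assumes "simple_graph G" "simple_graph H"
  shows "finite (verts (Q_sum G H))"
  using assms finite_edges[OF assms(1)] by (simp add: verts_Q_sum simple_graph_def)

lemma Q_sum_edge_Inl:
  assumes "{(Inl x, w), u} \<in> edges (Q_sum G H)"
  shows "(\<exists>w'. u = (Inl x, w') \<and> {w, w'} \<in> edges H) \<or> (\<exists>e. u = (Inr e, w) \<and> e \<in> edges_at G x)"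
  using assms unfolding Q_sum_def Q_graph_def edges_def edges_at_def
  by (simp add: doubleton_eq_iff) (elim disjE exE conjE; simp add: insert_commute)

lemma Q_sum_edge_Inr:
  assumes "{(Inr e, w), u} \<in> edges (Q_sum G H)"
  shows "(\<exists>z. u = (Inl z, w) \<and> z \<in> e) \<or> (\<exists>e'. u = (Inr e', w) \<and> e' \<in> edges G \<and> e' \<noteq> e \<and> e \<inter> e' \<noteq> {})"
  using assms unfolding Q_sum_def Q_graph_def edges_def
  by (simp add: doubleton_eq_iff) (elim disjE exE conjE; simp add: insert_commute Int_commute)

lemma card_neighbours_in_Q_sum_Inl:
  assumes "finite S"
  shows "card (neighbours_in (Q_sum G H) S (Inl x, w))
    \<le> card (neighbours_in H {w'. (Inl x, w') \<in> S} w) + card {e \<in> edges_at G x. (Inr e, w) \<in> S}"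
proof -
  let ?W = "{w'. (Inl x, w') \<in> S}" and ?A = "{e \<in> edges_at G x. (Inr e, w) \<in> S}"
  have fin: "finite ?W" "finite ?A"
    using finite_vimageI[OF assms, of "\<lambda>w'. (Inl x, w')"] finite_vimageI[OF assms, of "\<lambda>e. (Inr e, w)"]
    by (auto simp: inj_on_def vimage_def intro: rev_finite_subset)
  have "neighbours_in (Q_sum G H) S (Inl x, w)
      \<subseteq> (\<lambda>w'. (Inl x, w')) ` neighbours_in H ?W w \<union> (\<lambda>e. (Inr e, w)) ` ?A"
    by (auto simp: neighbours_in_def dest!: Q_sum_edge_Inl)
  then have "card (neighbours_in (Q_sum G H) S (Inl x, w))
      \<le> card ((\<lambda>w'. (Inl x, w')) ` neighbours_in H ?W w \<union> (\<lambda>e. (Inr e, w)) ` ?A)"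
    using fin by (intro card_mono) (auto simp: finite_neighbours_in)
  also have "\<dots> \<le> card (neighbours_in H ?W w) + card ?A"
    using fin by (intro card_Un_le[THEN order_trans] add_mono card_image_le finite_neighbours_in)
  finally show ?thesis .
qed

text \<open>The edge vertex itself is counted at both of its endpoints and is no neighbour of itself,
  whence the 2.\<close>
lemma card_neighbours_in_Q_sum_Inr:
  assumes "simple_graph G" "{x, y} \<in> edges G" "(Inr {x, y}, w) \<in> S"
  shows "card (neighbours_in (Q_sum G H) S (Inr {x, y}, w)) + 2
    \<le> card {z \<in> {x, y}. (Inl z, w) \<in> S}
       + card {e \<in> edges_at G x. (Inr e, w) \<in> S} + card {e \<in> edges_at G y. (Inr e, w) \<in> S}"
proof -
  let ?Z = "{z \<in> {x, y}. (Inl z, w) \<in> S}"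
  let ?A = "{e \<in> edges_at G x. (Inr e, w) \<in> S}" and ?B = "{e \<in> edges_at G y. (Inr e, w) \<in> S}"
  have fin: "finite ?A" "finite ?B" using finite_edges_at[OF assms(1)] by auto
  have common: "{x, y} \<in> ?A \<inter> ?B" using assms(2,3) by (simp add: edges_at_def)
  have "neighbours_in (Q_sum G H) S (Inr {x, y}, w)
      \<subseteq> (\<lambda>z. (Inl z, w)) ` ?Z \<union> (\<lambda>e. (Inr e, w)) ` (?A \<union> ?B - {{x, y}})"
    by (auto simp: neighbours_in_def edges_at_def dest!: Q_sum_edge_Inr)
  then have "card (neighbours_in (Q_sum G H) S (Inr {x, y}, w))
      \<le> card ((\<lambda>z. (Inl z, w)) ` ?Z \<union> (\<lambda>e. (Inr e, w)) ` (?A \<union> ?B - {{x, y}}))"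
    using fin by (intro card_mono) auto
  also have "\<dots> \<le> card ?Z + card (?A \<union> ?B - {{x, y}})"
    using fin by (intro card_Un_le[THEN order_trans] add_mono card_image_le) auto
  also have "card (?A \<union> ?B - {{x, y}}) + 1 = card (?A \<union> ?B)"
  proof -
    have "card (?A \<union> ?B) > 0" using fin common by (auto simp: card_gt_0_iff)
    then show ?thesis using fin common by (simp add: card_Diff_singleton)
  qed
  moreover have "card (?A \<union> ?B) + 1 \<le> card ?A + card ?B"
  proof -
    have "card (?A \<inter> ?B) > 0" using fin common by (intro card_gt_0_iff[THEN iffD2] conjI) blast+
    then show ?thesis using card_Un_Int[OF fin] by linarith
  qed
  ultimately show ?thesis by linarith
qed

lemma Q_sum_column_low_vertex:
  assumes "finite S" "S \<subseteq> verts (Q_sum G H)" "degenerate l H" "(Inl x, w\<^sub>0) \<in> S"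
    and "\<And>w. card {e \<in> edges_at G x. (Inr e, w) \<in> S} \<le> c"
  shows "\<exists>v\<in>S. card (neighbours_in (Q_sum G H) S v) \<le> l + c"
proof -
  let ?W = "{w. (Inl x, w) \<in> S}"
  have "?W \<subseteq> verts H" "?W \<noteq> {}" using assms(2,4) by (auto simp: verts_Q_sum)
  then obtain w where w: "w \<in> ?W" "card (neighbours_in H ?W w) \<le> l"
    using degenerate_low_vertex[OF assms(3)] by blast
  have "card (neighbours_in (Q_sum G H) S (Inl x, w)) \<le> l + c"
    using card_neighbours_in_Q_sum_Inl[OF assms(1), of G H x w] w(2) assms(5)[of w] by linarith
  with w(1) show ?thesis by blast
qed

subsection \<open>Degeneracy of the Q-sum\<close>

lemma degenerate_Q_sum_max_degree:
  assumes "simple_graph G" "simple_graph H" "degenerate l H"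
  shows "degenerate (max (2 * max_degree G - 2) (max_degree G + l)) (Q_sum G H)"
proof (rule degenerateI[OF finite_verts_Q_sum[OF assms(1,2)]])
  fix S assume S: "S \<subseteq> verts (Q_sum G H)" "S \<noteq> {}"
  let ?\<Delta> = "max_degree G"
  have "finite S" using S(1) finite_verts_Q_sum[OF assms(1,2)] by (rule finite_subset)
  have incident: "card {e \<in> edges_at G z. (Inr e, w) \<in> S} \<le> ?\<Delta>" for z w
    by (rule card_edges_at_filter_le_max_degree[OF assms(1)])
  show "\<exists>v\<in>S. card (neighbours_in (Q_sum G H) S v) \<le> max (2 * ?\<Delta> - 2) (?\<Delta> + l)"
  proof (cases "\<exists>x w. (Inl x, w) \<in> S")
    case True
    then obtain x w where "(Inl x, w) \<in> S" by blast
    from Q_sum_column_low_vertex[OF \<open>finite S\<close> S(1) assms(3) this incident]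
    obtain v where "v \<in> S" "card (neighbours_in (Q_sum G H) S v) \<le> l + ?\<Delta>" by blast
    then show ?thesis by (intro bexI[of _ v]) simp_all
  next
    case False
    then obtain e w where ew: "(Inr e, w) \<in> S"
      using S(2) by (metis all_not_in_conv obj_sumE prod.collapse)
    then have "e \<in> edges G" using S(1) by (auto simp: verts_Q_sum)
    then obtain x y where xy: "e = {x, y}" by (rule simple_graph_edgeE[OF assms(1)])
    have "{z \<in> {x, y}. (Inl z, w) \<in> S} = {}" using False by blast
    then have "card {z \<in> {x, y}. (Inl z, w) \<in> S} = 0" by (simp only: card.empty)
    moreover have "card (neighbours_in (Q_sum G H) S (Inr e, w)) + 2
        \<le> card {z \<in> {x, y}. (Inl z, w) \<in> S}
          + card {e \<in> edges_at G x. (Inr e, w) \<in> S} + card {e \<in> edges_at G y. (Inr e, w) \<in> S}"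
      using card_neighbours_in_Q_sum_Inr[OF assms(1), of x y w S H] \<open>e \<in> edges G\<close> ew xy by blast
    ultimately have "card (neighbours_in (Q_sum G H) S (Inr e, w)) + 2 \<le> 2 * ?\<Delta>"
      using incident[of x w] incident[of y w] by linarith
    with ew show ?thesis by (intro bexI[of _ "(Inr e, w)"]) auto
  qed
qed

lemma degenerate_Q_sum:
  assumes "simple_graph G" "simple_graph H" "degenerate k G" "degenerate l H"
  shows "degenerate (max (k + max_degree G - 1) (k + l)) (Q_sum G H)"
proof (rule degenerateI[OF finite_verts_Q_sum[OF assms(1,2)]])
  fix S assume S: "S \<subseteq> verts (Q_sum G H)" "S \<noteq> {}"
  let ?\<Delta> = "max_degree G"
  have "finite S" using S(1) finite_verts_Q_sum[OF assms(1,2)] by (rule finite_subset)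
  define X where "X = {x. \<exists>w. (Inl x, w) \<in> S} \<union> {x. \<exists>e w. (Inr e, w) \<in> S \<and> x \<in> e}"
  have "X \<subseteq> verts G"
    using S(1) simple_graph_edge_subset[OF assms(1)] by (auto simp: X_def verts_Q_sum)
  moreover have "X \<noteq> {}"
  proof -
    obtain a w where aw: "(a, w) \<in> S" using S(2) by auto
    show ?thesis
    proof (cases a)
      case (Inl x)
      then show ?thesis using aw by (auto simp: X_def)
    next
      case (Inr e)
      then have "e \<in> edges G" using aw S(1) by (auto simp: verts_Q_sum)
      then obtain x y where "e = {x, y}" by (rule simple_graph_edgeE[OF assms(1)])
      then show ?thesis unfolding X_def using aw Inr by blast
    qed
  qed
  ultimately obtain x where x: "x \<in> X" "card (neighbours_in G X x) \<le> k"
    using degenerate_low_vertex[OF assms(3)] by blast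
  have "finite X" using \<open>X \<subseteq> verts G\<close> assms(1) by (auto simp: simple_graph_def intro: finite_subset)
  have few: "card {e \<in> edges_at G x. (Inr e, w) \<in> S} \<le> k" for w
  proof -
    have "card {e \<in> edges_at G x. (Inr e, w) \<in> S} \<le> card {e \<in> edges_at G x. e \<subseteq> X}"
      using finite_edges_at[OF assms(1)] by (intro card_mono) (auto simp: X_def)
    also have "\<dots> \<le> card (neighbours_in G X x)"
      by (rule card_edges_at_within_le[OF assms(1) \<open>finite X\<close>])
    finally show ?thesis using x(2) by linarith
  qed
  show "\<exists>v\<in>S. card (neighbours_in (Q_sum G H) S v) \<le> max (k + ?\<Delta> - 1) (k + l)"
  proof (cases "\<exists>w. (Inl x, w) \<in> S")
    case True
    then obtain w where "(Inl x, w) \<in> S" by blast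
    from Q_sum_column_low_vertex[OF \<open>finite S\<close> S(1) assms(4) this few]
    obtain v where "v \<in> S" "card (neighbours_in (Q_sum G H) S v) \<le> l + k" by blast
    then show ?thesis by (intro bexI[of _ v]) simp_all
  next
    case False
    then obtain e w where ew: "(Inr e, w) \<in> S" "x \<in> e" using x(1) by (auto simp: X_def)
    then have "e \<in> edges G" using S(1) by (auto simp: verts_Q_sum)
    then obtain a b where "e = {a, b}" by (rule simple_graph_edgeE[OF assms(1)])
    then obtain y where xy: "e = {x, y}" using ew(2) by (auto simp: insert_commute)
    have "{z \<in> {x, y}. (Inl z, w) \<in> S} \<subseteq> {y}" using False by blast
    then have "card {z \<in> {x, y}. (Inl z, w) \<in> S} \<le> 1"
      using card_mono[of "{y}"] by simp
    moreover have "card {e \<in> edges_at G y. (Inr e, w) \<in> S} \<le> ?\<Delta>"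
      by (rule card_edges_at_filter_le_max_degree[OF assms(1)])
    moreover have "card (neighbours_in (Q_sum G H) S (Inr e, w)) + 2
        \<le> card {z \<in> {x, y}. (Inl z, w) \<in> S}
          + card {e \<in> edges_at G x. (Inr e, w) \<in> S} + card {e \<in> edges_at G y. (Inr e, w) \<in> S}"
      using card_neighbours_in_Q_sum_Inr[OF assms(1), of x y w S H] \<open>e \<in> edges G\<close> ew xy by blast
    ultimately have "card (neighbours_in (Q_sum G H) S (Inr e, w)) + 2 \<le> 1 + k + ?\<Delta>"
      using few[of w] by linarith
    with ew show ?thesis by (intro bexI[of _ "(Inr e, w)"]) auto
  qed
qed

theorem theorem3:
  fixes G :: "'a graph" and H :: "'b graph" and k l :: nat
  assumes "simple_graph G" and "simple_graph H"
    and "degenerate k G" and "max_degree G > 1"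
    and "degenerate l H"
  shows "degenerate (max (2 * max_degree G - 2) (k + l)) (Q_sum G H)"
proof (cases "k < max_degree G")
  case True
  then show ?thesis by (intro degenerate_mono[OF degenerate_Q_sum[OF assms(1,2,3,5)]]) auto
next
  case False
  then show ?thesis by (intro degenerate_mono[OF degenerate_Q_sum_max_degree[OF assms(1,2,5)]]) auto
qed

end
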